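(* Let $n\ge 1$ and $Dic_{4n}=\langle a,x\mid a^{2n}=1,\ x^2=a^n,\ x^{-1}ax=a^{-1}\rangle$ be the dicyclic group of order $4n$. Then: \begin{enumerate} \item If $n\neq 2$, then $\mathcal{CD}(Dic_{4n})$ is a chain of length $0$; namely $\mathcal{CD}(Dic_{4n})=\{Dic_{4n}\}$ for $n=1$, and $\mathcal{CD}(Dic_{4n})=\{\langle a\rangle\}$ for $n\ge 3$. \item If $n=2$, then $\mathcal{CD}(Dic_{4n})$ is a quasi-antichain of width $3$, namely the set of all subgroups $H$ with $Z(Dic_{4n})\le H\le Dic_{4n}$. \end{enumerate}
   Context: For a finite group $G$ and $H\le G$, $m_G(H)=|H|\,|C_G(H)|$, $m^*(G)=\max\{m_G(H)\mid H\le G\}$, and the Chermak-Delgado lattice is $\mathcal{CD}(G)=\{H\le G\mid m_G(H)=m^*(G)\}$. A chain of length $0$ is a one-element lattice. A lattice is a quasi-antichain of width $w$ if it consists of a least element, a greatest element, and $w$ further pairwise incomparable elements. *)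

theory Defs
  imports "HOL-Algebra.Algebra"
begin

definition centralizer :: "('a, 'b) monoid_scheme \<Rightarrow> 'a set \<Rightarrow> 'a set" where
  "centralizer G H = {g \<in> carrier G. \<forall>h\<in>H. g \<otimes>\<^bsub>G\<^esub> h = h \<otimes>\<^bsub>G\<^esub> g}"

definition group_center :: "('a, 'b) monoid_scheme \<Rightarrow> 'a set" where
  "group_center G = centralizer G (carrier G)"

definition cd_measure :: "('a, 'b) monoid_scheme \<Rightarrow> 'a set \<Rightarrow> nat" where
  "cd_measure G H = card H * card (centralizer G H)"

definition cd_max :: "('a, 'b) monoid_scheme \<Rightarrow> nat" where
  "cd_max G = Max {cd_measure G H | H. subgroup H G}"

definition CD_lattice :: "('a, 'b) monoid_scheme \<Rightarrow> 'a set set" where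
  "CD_lattice G = {H. subgroup H G \<and> cd_measure G H = cd_max G}"

definition chain_length_zero :: "'a set set \<Rightarrow> bool" where
  "chain_length_zero L \<longleftrightarrow> card L = 1"

definition quasi_antichain :: "'a set set \<Rightarrow> nat \<Rightarrow> bool" where
  "quasi_antichain LL w \<longleftrightarrow>
     (\<exists>bt tp mids. LL = {bt, tp} \<union> mids \<and> bt \<noteq> tp \<and> bt \<notin> mids \<and> tp \<notin> mids
        \<and> finite mids \<and> card mids = w
        \<and> (\<forall>S\<in>LL. bt \<subseteq> S \<and> S \<subseteq> tp)
        \<and> (\<forall>S\<in>mids. \<forall>T\<in>mids. S \<subseteq> T \<longrightarrow> S = T))"

end

theory Submission
  imports Defs
begin

text \<open>Every element of \<open>Dic\<^sub>4\<^sub>n\<close> is \<open>a\<^sup>i\<close> or \<open>a\<^sup>i x\<close>; \<open>a\<^sup>i\<close> commutes with \<open>a\<^sup>j x\<close> iff \<open>n\<close> divides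
  \<open>i\<close>, and \<open>a\<^sup>i x\<close>, \<open>a\<^sup>j x\<close> commute iff \<open>n\<close> divides \<open>i - j\<close>. So a subgroup \<open>H\<close> either lies in
  \<open>Z = \<langle>a\<^sup>n\<rangle>\<close>; or lies in \<open>\<langle>a\<rangle>\<close> and contains a non-central power of \<open>a\<close>, forcing
  \<open>C(H) \<le> \<langle>a\<rangle>\<close>; or contains such a power and some \<open>a\<^sup>j x\<close>, forcing \<open>C(H) \<le> Z\<close>; or lies,
  together with \<open>C(H)\<close>, in the cyclic group \<open>\<langle>a\<^sup>j x\<rangle>\<close> of order 4. The four cases bound
  \<open>m(H)\<close> by \<open>8n\<close>, \<open>4n\<^sup>2\<close>, \<open>8n\<close> and \<open>16\<close>, with equality only for \<open>H\<close> equal to the bounding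
  set. For \<open>n \<ge> 3\<close> only \<open>\<langle>a\<rangle>\<close> reaches \<open>4n\<^sup>2\<close>; for \<open>n = 2\<close> all four bounds equal 16 and
  are reached exactly by \<open>Z\<close>, \<open>\<langle>a\<rangle>\<close>, \<open>G\<close> and the two groups \<open>\<langle>a\<^sup>j x\<rangle>\<close>, which are the
  subgroups containing \<open>Z\<close>. For \<open>n = 1\<close> the group is abelian, and an abelian group is its own
  Chermak-Delgado lattice.\<close>

lemma centralizer_subset_carrier: "centralizer G H \<subseteq> carrier G"
  unfolding centralizer_def by auto

lemma cd_measure_le:
  assumes "H \<subseteq> S" "centralizer G H \<subseteq> T" "finite S" "finite T"
  shows "cd_measure G H \<le> card S * card T"
  unfolding cd_measure_def using assms by (intro mult_le_mono card_mono)

lemma cd_measure_eq_imp_eq: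
  assumes "H \<subseteq> S" "centralizer G H \<subseteq> T" "finite S" "finite T" "card T > 0"
    and "cd_measure G H = card S * card T"
  shows "H = S"
proof -
  have "card (centralizer G H) \<le> card T" using assms(2,4) by (rule card_mono[rotated])
  then have "card S * card T \<le> card H * card T"
    using assms(6) unfolding cd_measure_def by (metis mult_le_mono2)
  then have "card S \<le> card H" using \<open>card T > 0\<close> by simp
  then show ?thesis using assms(1,3) by (metis card_seteq)
qed

lemma cd_max_eqI:
  assumes "finite (carrier G)" "\<And>H. subgroup H G \<Longrightarrow> cd_measure G H \<le> M"
    and "subgroup K G" "cd_measure G K = M"
  shows "cd_max G = M"
proof -
  have "{cd_measure G H | H. subgroup H G} \<subseteq> cd_measure G ` Pow (carrier G)"
    using subgroup.subset by blast
  then have "finite {cd_measure G H | H. subgroup H G}"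
    using assms(1) by (meson finite_Pow_iff finite_surj)
  then show ?thesis unfolding cd_max_def using assms by (intro Max_eqI) auto
qed

lemma CD_lattice_comm_group:
  assumes "comm_group G" "finite (carrier G)"
  shows "CD_lattice G = {carrier G}"
proof -
  interpret comm_group G by fact
  have centralizer: "centralizer G H = carrier G" if "H \<subseteq> carrier G" for H
    using that unfolding centralizer_def by (auto intro: m_comm)
  have bound: "cd_measure G H \<le> card (carrier G) * card (carrier G)" if "subgroup H G" for H
    using assms(2) subgroup.subset[OF that] centralizer_subset_carrier by (intro cd_measure_le)
  have top: "cd_measure G (carrier G) = card (carrier G) * card (carrier G)"
    unfolding cd_measure_def by (simp add: centralizer)
  have eq: "H = carrier G"
    if "subgroup H G" "cd_measure G H = card (carrier G) * card (carrier G)" for H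
  proof (rule cd_measure_eq_imp_eq[OF subgroup.subset[OF that(1)] centralizer_subset_carrier assms(2,2)])
    show "card (carrier G) > 0" using assms(2) by (auto simp: card_gt_0_iff)
  qed (use that in simp)
  have "cd_max G = card (carrier G) * card (carrier G)"
    by (rule cd_max_eqI[OF assms(2) bound subgroup_self top])
  then show ?thesis
    unfolding CD_lattice_def using eq top subgroup_self by auto
qed

lemma int_dvd_diff_trans:
  fixes m k l j :: int
  assumes "m dvd k - l" "m dvd l - j"
  shows "m dvd k - j"
  using dvd_add[OF assms] by simp

lemma int_dvd_cases:
  fixes m k :: int
  assumes "m dvd k"
  shows "2 * m dvd k \<or> 2 * m dvd k - m"
proof -
  obtain t where k: "k = m * t" using assms by blast
  show ?thesis
  proof (cases "even t")
    case True
    then obtain s where "t = 2 * s" by blast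
    then have "k = 2 * m * s" using k by simp
    then show ?thesis by simp
  next
    case False
    then obtain s where "t = 2 * s + 1" by (blast elim: oddE)
    then have "k - m = 2 * m * s" using k by (simp add: algebra_simps)
    then show ?thesis by simp
  qed
qed

lemma four_n_sq_bounds:
  fixes n :: nat
  assumes "n \<ge> 2"
  shows "8 * n \<le> 4 * n * n" "16 \<le> 4 * n * n"
    and "8 * n = 4 * n * n \<Longrightarrow> n = 2" "16 = 4 * n * n \<Longrightarrow> n = 2"
proof -
  have "2 * n \<le> n * n" using mult_le_mono1[OF assms] .
  then show "8 * n \<le> 4 * n * n" "16 \<le> 4 * n * n"
    using mult_le_mono[OF assms assms] by simp_all
  show "n = 2" if "8 * n = 4 * n * n"
    using that assms by simp
  show "n = 2" if "16 = 4 * n * n"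
  proof (rule ccontr)
    assume "n \<noteq> 2"
    then have "3 * 3 \<le> n * n" using assms by (intro mult_le_mono) simp_all
    then show False using that by simp
  qed
qed

locale dicyclic = group G for G (structure) +
  fixes a x :: 'a and n :: nat
  assumes n_pos: "n \<ge> 1"
    and a_closed: "a \<in> carrier G" and x_closed: "x \<in> carrier G"
    and generated: "generate G {a, x} = carrier G"
    and a_order: "a [^] (2 * n) = \<one>"
    and x_square: "x [^] (2::nat) = a [^] n"
    and x_conj_a: "inv x \<otimes> a \<otimes> x = inv a"
    and finite_carrier: "finite (carrier G)" and card_carrier: "card (carrier G) = 4 * n"
begin

definition a_pow :: "int \<Rightarrow> 'a" where "a_pow i = a [^] i"
definition a_pow_x :: "int \<Rightarrow> 'a" where "a_pow_x i = a [^] i \<otimes> x"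

lemma a_pow_closed [simp]: "a_pow i \<in> carrier G"
  unfolding a_pow_def using a_closed by simp

lemma a_pow_x_closed [simp]: "a_pow_x i \<in> carrier G"
  unfolding a_pow_x_def using a_closed x_closed by simp

lemma a_pow_zero: "a_pow 0 = \<one>"
  unfolding a_pow_def by simp

lemma a_pow_mult_a_pow: "a_pow i \<otimes> a_pow j = a_pow (i + j)"
  unfolding a_pow_def using a_closed by (simp add: int_pow_mult)

lemma a_pow_mult_a_pow_x: "a_pow i \<otimes> a_pow_x j = a_pow_x (i + j)"
  unfolding a_pow_def a_pow_x_def using a_closed x_closed by (simp add: int_pow_mult m_assoc)

lemma x_mult_a_pow: "x \<otimes> a_pow k = a_pow_x (- k)"
proof -
  have "x \<otimes> (inv x \<otimes> g) = g" if "g \<in> carrier G" for g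
    using that x_closed by (simp add: m_assoc[symmetric])
  then have conj_hom: "(\<lambda>g. inv x \<otimes> g \<otimes> x) \<in> hom G G"
    unfolding hom_def using x_closed by (auto simp: m_assoc)
  have "inv x \<otimes> a [^] (- k) \<otimes> x = (inv x \<otimes> a \<otimes> x) [^] (- k)"
    using hom_int_pow[OF conj_hom a_closed is_group is_group] by simp
  also have "\<dots> = a [^] k"
    using a_closed by (simp add: x_conj_a int_pow_inv int_pow_neg)
  finally have "x \<otimes> (inv x \<otimes> a [^] (- k) \<otimes> x) = x \<otimes> a [^] k" by simp
  then show ?thesis
    unfolding a_pow_def a_pow_x_def using a_closed x_closed by (simp add: m_assoc[symmetric])
qed

lemma a_pow_x_mult_a_pow: "a_pow_x i \<otimes> a_pow j = a_pow_x (i - j)"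
proof -
  have "a_pow_x i \<otimes> a_pow j = a_pow i \<otimes> (x \<otimes> a_pow j)"
    unfolding a_pow_x_def a_pow_def using a_closed x_closed by (simp add: m_assoc)
  then show ?thesis by (simp add: x_mult_a_pow a_pow_mult_a_pow_x)
qed

lemma a_pow_x_mult_a_pow_x: "a_pow_x i \<otimes> a_pow_x j = a_pow (i - j + n)"
proof -
  have "x \<otimes> x = a_pow n"
    using x_square x_closed a_closed unfolding a_pow_def by (simp add: int_pow_int numeral_2_eq_2)
  have "a_pow_x i \<otimes> a_pow_x j = (a_pow_x i \<otimes> a_pow j) \<otimes> x"
    unfolding a_pow_x_def a_pow_def using a_closed x_closed by (simp add: m_assoc)
  also have "\<dots> = a_pow (i - j) \<otimes> (x \<otimes> x)"
    unfolding a_pow_x_mult_a_pow unfolding a_pow_x_def a_pow_def using a_closed x_closed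
    by (simp add: m_assoc)
  finally show ?thesis
    using \<open>x \<otimes> x = a_pow n\<close> by (simp add: a_pow_mult_a_pow)
qed

lemma a_pow_2n: "a_pow (2 * int n) = \<one>"
  using a_order unfolding a_pow_def by (metis int_pow_int of_nat_mult of_nat_numeral)

lemma a_pow_mod: "a_pow (i mod (2 * int n)) = a_pow i"
proof -
  have "a_pow i = a_pow (2 * int n * (i div (2 * int n))) \<otimes> a_pow (i mod (2 * int n))"
    by (simp add: a_pow_mult_a_pow)
  also have "a_pow (2 * int n * (i div (2 * int n))) = \<one>"
    using a_pow_2n a_closed unfolding a_pow_def by (metis int_pow_one int_pow_pow)
  finally show ?thesis by simp
qed

lemma a_pow_x_mod: "a_pow_x (i mod (2 * int n)) = a_pow_x i"
  using a_pow_mod unfolding a_pow_x_def a_pow_def by metis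

lemma inv_a_pow: "inv (a_pow i) = a_pow (- i)"
  by (rule inv_equality) (simp_all add: a_pow_mult_a_pow a_pow_zero)

lemma inv_a_pow_x: "inv (a_pow_x i) = a_pow_x (i + n)"
  by (rule inv_equality) (simp_all add: a_pow_x_mult_a_pow_x a_pow_zero a_pow_2n)

lemma carrier_eq: "carrier G = range a_pow \<union> range a_pow_x"
proof
  have "subgroup (range a_pow \<union> range a_pow_x) G"
  proof (rule subgroupI)
    show "inv h \<in> range a_pow \<union> range a_pow_x" if "h \<in> range a_pow \<union> range a_pow_x" for h
      using that by (auto simp: inv_a_pow inv_a_pow_x)
    show "h \<otimes> k \<in> range a_pow \<union> range a_pow_x"
      if "h \<in> range a_pow \<union> range a_pow_x" "k \<in> range a_pow \<union> range a_pow_x" for h k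
      using that by (auto simp: a_pow_mult_a_pow a_pow_mult_a_pow_x a_pow_x_mult_a_pow a_pow_x_mult_a_pow_x)
  qed auto
  moreover have "a = a_pow 1" "x = a_pow_x 0"
    unfolding a_pow_def a_pow_x_def using a_closed x_closed by simp_all
  ultimately have "generate G {a, x} \<subseteq> range a_pow \<union> range a_pow_x"
    by (intro generate_subgroup_incl) auto
  then show "carrier G \<subseteq> range a_pow \<union> range a_pow_x"
    using generated by simp
qed auto

lemma normal_form:
  defines "I \<equiv> {0..<2 * int n}"
  shows "inj_on a_pow I" "inj_on a_pow_x I" "a_pow ` I \<inter> a_pow_x ` I = {}"
proof -
  have "i mod (2 * int n) \<in> I" for i
    using n_pos unfolding I_def by simp
  then have "a_pow i \<in> a_pow ` I" "a_pow_x i \<in> a_pow_x ` I" for i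
    by (auto intro!: image_eqI[where x = "i mod (2 * int n)"] simp: a_pow_mod a_pow_x_mod)
  then have "carrier G = a_pow ` I \<union> a_pow_x ` I"
    unfolding carrier_eq by auto
  then have "4 * n \<le> card (a_pow ` I) + card (a_pow_x ` I)"
    using card_carrier card_Un_le by metis
  moreover have "card (a_pow ` I) \<le> 2 * n" "card (a_pow_x ` I) \<le> 2 * n"
    using card_image_le[of I] unfolding I_def by (simp_all add: nat_mult_distrib)
  ultimately have card_images: "card (a_pow ` I) = card I" "card (a_pow_x ` I) = card I"
    unfolding I_def by (simp_all add: nat_mult_distrib)
  then show "inj_on a_pow I" "inj_on a_pow_x I"
    unfolding I_def by (simp_all add: eq_card_imp_inj_on)
  have "card (a_pow ` I \<union> a_pow_x ` I) = card (a_pow ` I) + card (a_pow_x ` I)"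
    using \<open>carrier G = a_pow ` I \<union> a_pow_x ` I\<close> card_carrier card_images
    unfolding I_def by (simp add: nat_mult_distrib)
  moreover have "finite (a_pow ` I)" "finite (a_pow_x ` I)"
    unfolding I_def by simp_all
  ultimately show "a_pow ` I \<inter> a_pow_x ` I = {}"
    using card_Un_Int by fastforce
qed

lemma a_pow_eq_iff: "a_pow i = a_pow j \<longleftrightarrow> 2 * int n dvd i - j"
proof -
  have "a_pow i = a_pow j \<longleftrightarrow> a_pow (i mod (2 * int n)) = a_pow (j mod (2 * int n))"
    by (simp add: a_pow_mod)
  also have "\<dots> \<longleftrightarrow> i mod (2 * int n) = j mod (2 * int n)"
    using inj_onD[OF normal_form(1)] n_pos by auto
  finally show ?thesis by (simp add: mod_eq_dvd_iff)
qed

lemma a_pow_x_eq_iff: "a_pow_x i = a_pow_x j \<longleftrightarrow> 2 * int n dvd i - j"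
proof -
  have "a_pow_x i = a_pow_x j \<longleftrightarrow> a_pow_x (i mod (2 * int n)) = a_pow_x (j mod (2 * int n))"
    by (simp add: a_pow_x_mod)
  also have "\<dots> \<longleftrightarrow> i mod (2 * int n) = j mod (2 * int n)"
    using inj_onD[OF normal_form(2)] n_pos by auto
  finally show ?thesis by (simp add: mod_eq_dvd_iff)
qed

lemma a_pow_neq_a_pow_x [simp]: "a_pow i \<noteq> a_pow_x j"
proof
  assume "a_pow i = a_pow_x j"
  then have "a_pow (i mod (2 * int n)) = a_pow_x (j mod (2 * int n))"
    by (simp add: a_pow_mod a_pow_x_mod)
  moreover have "i mod (2 * int n) \<in> {0..<2 * int n}" "j mod (2 * int n) \<in> {0..<2 * int n}"
    using n_pos by simp_all
  ultimately show False
    using normal_form(3) by blast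
qed

lemma a_pow_x_neq_a_pow [simp]: "a_pow_x j \<noteq> a_pow i"
  using a_pow_neq_a_pow_x by metis

lemma a_pow_commute: "a_pow i \<otimes> a_pow j = a_pow j \<otimes> a_pow i"
  by (simp add: a_pow_mult_a_pow add.commute)

lemma a_pow_commute_a_pow_x_iff: "a_pow i \<otimes> a_pow_x j = a_pow_x j \<otimes> a_pow i \<longleftrightarrow> int n dvd i"
proof -
  have "a_pow i \<otimes> a_pow_x j = a_pow_x j \<otimes> a_pow i \<longleftrightarrow> 2 * int n dvd 2 * i"
    by (simp add: a_pow_mult_a_pow_x a_pow_x_mult_a_pow a_pow_x_eq_iff)
  then show ?thesis by simp
qed

lemma a_pow_x_commute_a_pow_iff: "a_pow_x j \<otimes> a_pow i = a_pow i \<otimes> a_pow_x j \<longleftrightarrow> int n dvd i"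
  using a_pow_commute_a_pow_x_iff by metis

lemma a_pow_x_commute_iff: "a_pow_x i \<otimes> a_pow_x j = a_pow_x j \<otimes> a_pow_x i \<longleftrightarrow> int n dvd i - j"
proof -
  have "(i - j + n) - (j - i + n) = 2 * (i - j)" by simp
  then have "a_pow_x i \<otimes> a_pow_x j = a_pow_x j \<otimes> a_pow_x i \<longleftrightarrow> 2 * int n dvd 2 * (i - j)"
    by (simp only: a_pow_x_mult_a_pow_x a_pow_eq_iff)
  also have "\<dots> \<longleftrightarrow> int n dvd i - j"
    by (rule dvd_times_left_cancel_iff) simp
  finally show ?thesis .
qed

lemma carrier_cases:
  assumes "g \<in> carrier G"
  obtains i where "g = a_pow i" | i where "g = a_pow_x i"
  using assms unfolding carrier_eq by blast

lemma generate_a: "generate G {a} = range a_pow"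
  unfolding generate_pow[OF a_closed] a_pow_def by auto

lemma subgroup_range_a_pow: "subgroup (range a_pow) G"
  using generate_is_subgroup[of "{a}"] a_closed generate_a by simp

lemma card_range_a_pow: "card (range a_pow) = 2 * n"
proof -
  have "range a_pow = a_pow ` {0..<2 * int n}"
  proof (intro subset_antisym subsetI)
    fix g assume "g \<in> range a_pow"
    then obtain i where "g = a_pow (i mod (2 * int n))" by (auto simp: a_pow_mod)
    moreover have "i mod (2 * int n) \<in> {0..<2 * int n}" using n_pos by simp
    ultimately show "g \<in> a_pow ` {0..<2 * int n}" by blast
  qed auto
  then show ?thesis
    using card_image[OF normal_form(1)] by (simp add: nat_mult_distrib)
qed

lemma finite_range_a_pow: "finite (range a_pow)"
  using finite_carrier by (rule finite_subset[rotated]) auto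

definition Z :: "'a set" where "Z = {a_pow k | k. int n dvd k}"

text \<open>\<open>Z\<close> is the centre \<open>\<langle>a\<^sup>n\<rangle>\<close> (for \<open>n \<ge> 2\<close>) and \<open>ax_subgroup j\<close> the cyclic subgroup
  \<open>\<langle>a\<^sup>j x\<rangle>\<close> of order 4.\<close>

definition ax_subgroup :: "int \<Rightarrow> 'a set" where
  "ax_subgroup j = Z \<union> {a_pow_x k | k. int n dvd k - j}"

lemma a_pow_in_Z_iff: "a_pow k \<in> Z \<longleftrightarrow> int n dvd k"
proof
  assume "a_pow k \<in> Z"
  then obtain l where "a_pow k = a_pow l" "int n dvd l"
    unfolding Z_def by blast
  then show "int n dvd k"
    unfolding a_pow_eq_iff using int_dvd_diff_trans[of "int n" k l 0] by (auto dest: dvd_mult_right)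
qed (unfold Z_def, blast)

lemma a_pow_x_notin_Z [simp]: "a_pow_x k \<notin> Z"
  unfolding Z_def by auto

lemma a_pow_in_ax_subgroup_iff: "a_pow k \<in> ax_subgroup j \<longleftrightarrow> int n dvd k"
  unfolding ax_subgroup_def by (auto simp: a_pow_in_Z_iff)

lemma a_pow_x_in_ax_subgroup_iff: "a_pow_x k \<in> ax_subgroup j \<longleftrightarrow> int n dvd k - j"
proof
  assume "a_pow_x k \<in> ax_subgroup j"
  then obtain l where "a_pow_x k = a_pow_x l" "int n dvd l - j"
    unfolding ax_subgroup_def by auto
  then show "int n dvd k - j"
    unfolding a_pow_x_eq_iff using int_dvd_diff_trans[of "int n" k l j] by (auto dest: dvd_mult_right)
qed (unfold ax_subgroup_def, blast)

lemma Z_eq: "Z = {a_pow 0, a_pow n}"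
proof -
  have "a_pow k \<in> {a_pow 0, a_pow n}" if "int n dvd k" for k
    using int_dvd_cases[OF that] by (auto simp: a_pow_eq_iff)
  then have "Z \<subseteq> {a_pow 0, a_pow n}"
    unfolding Z_def by blast
  then show ?thesis
    by (rule subset_antisym) (simp add: a_pow_in_Z_iff)
qed

lemma ax_subgroup_eq: "ax_subgroup j = {a_pow 0, a_pow n, a_pow_x j, a_pow_x (j + n)}"
proof -
  have "a_pow_x k \<in> {a_pow_x j, a_pow_x (j + n)}" if "int n dvd k - j" for k
    using int_dvd_cases[OF that] by (auto simp: a_pow_x_eq_iff diff_diff_eq)
  then have "ax_subgroup j \<subseteq> {a_pow 0, a_pow n, a_pow_x j, a_pow_x (j + n)}"
    unfolding ax_subgroup_def Z_eq by blast
  then show ?thesis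
    by (rule subset_antisym) (simp add: a_pow_in_ax_subgroup_iff a_pow_x_in_ax_subgroup_iff)
qed

lemma a_pow_n_neq_a_pow_zero: "a_pow n \<noteq> a_pow 0"
  using n_pos by (auto simp: a_pow_eq_iff zdvd_not_zless)

lemma card_Z: "card Z = 2"
  unfolding Z_eq using a_pow_n_neq_a_pow_zero by simp

lemma card_ax_subgroup: "card (ax_subgroup j) = 4"
proof -
  have "a_pow_x j \<noteq> a_pow_x (j + n)"
    using n_pos by (auto simp: a_pow_x_eq_iff zdvd_not_zless)
  then show ?thesis
    unfolding ax_subgroup_eq using a_pow_n_neq_a_pow_zero by simp
qed

lemma subgroup_Z: "subgroup Z G"
proof (rule subgroupI)
  show "inv h \<in> Z" if "h \<in> Z" for h
    using that unfolding Z_def by (auto simp: inv_a_pow)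
  show "h \<otimes> k \<in> Z" if "h \<in> Z" "k \<in> Z" for h k
    using that unfolding Z_def by (auto simp: a_pow_mult_a_pow)
qed (auto simp: Z_def)

lemma subgroup_ax_subgroup: "subgroup (ax_subgroup j) G"
proof (rule subgroupI)
  show "ax_subgroup j \<subseteq> carrier G"
    unfolding ax_subgroup_eq by simp
  show "inv h \<in> ax_subgroup j" if "h \<in> ax_subgroup j" for h
    using that unfolding ax_subgroup_eq by (auto simp: inv_a_pow inv_a_pow_x a_pow_eq_iff a_pow_x_eq_iff)
  show "h \<otimes> k \<in> ax_subgroup j" if "h \<in> ax_subgroup j" "k \<in> ax_subgroup j" for h k
    using that unfolding ax_subgroup_eq
    by (auto simp: a_pow_mult_a_pow a_pow_mult_a_pow_x a_pow_x_mult_a_pow a_pow_x_mult_a_pow_x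
        a_pow_eq_iff a_pow_x_eq_iff)
qed (auto simp: ax_subgroup_eq)

lemma centralizer_subset_range_a_pow:
  assumes "a_pow i \<in> H" "\<not> int n dvd i"
  shows "centralizer G H \<subseteq> range a_pow"
proof
  fix g assume "g \<in> centralizer G H"
  then have "g \<in> carrier G" "g \<otimes> a_pow i = a_pow i \<otimes> g"
    using assms(1) unfolding centralizer_def by auto
  then show "g \<in> range a_pow"
    using assms(2) by (cases rule: carrier_cases) (auto simp: a_pow_x_commute_a_pow_iff)
qed

lemma centralizer_subset_ax_subgroup:
  assumes "a_pow_x j \<in> H"
  shows "centralizer G H \<subseteq> ax_subgroup j"
proof
  fix g assume "g \<in> centralizer G H"
  then have "g \<in> carrier G" "g \<otimes> a_pow_x j = a_pow_x j \<otimes> g"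
    using assms unfolding centralizer_def by auto
  then show "g \<in> ax_subgroup j"
    by (cases rule: carrier_cases)
      (auto simp: a_pow_in_ax_subgroup_iff a_pow_x_in_ax_subgroup_iff a_pow_commute_a_pow_x_iff
        a_pow_x_commute_iff)
qed

lemma centralizer_subset_Z:
  assumes "a_pow i \<in> H" "\<not> int n dvd i" "a_pow_x j \<in> H"
  shows "centralizer G H \<subseteq> Z"
proof
  fix g assume "g \<in> centralizer G H"
  then obtain k where "g = a_pow k" "g \<in> ax_subgroup j"
    using centralizer_subset_range_a_pow[OF assms(1,2)] centralizer_subset_ax_subgroup[OF assms(3)]
    by blast
  then show "g \<in> Z"
    by (simp add: a_pow_in_ax_subgroup_iff a_pow_in_Z_iff)
qed

lemma centralizer_Z: "centralizer G Z = carrier G"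
proof -
  have "g \<otimes> h = h \<otimes> g" if "g \<in> carrier G" "h \<in> Z" for g h
    using that unfolding Z_def
    by (cases rule: carrier_cases) (auto simp: a_pow_commute a_pow_x_commute_a_pow_iff)
  then show ?thesis
    unfolding centralizer_def by auto
qed

lemma centralizer_range_a_pow:
  assumes "n \<ge> 2"
  shows "centralizer G (range a_pow) = range a_pow"
proof
  show "centralizer G (range a_pow) \<subseteq> range a_pow"
    using assms by (intro centralizer_subset_range_a_pow[of 1]) auto
  show "range a_pow \<subseteq> centralizer G (range a_pow)"
    unfolding centralizer_def by (auto simp: a_pow_commute)
qed

lemma centralizer_ax_subgroup: "centralizer G (ax_subgroup j) = ax_subgroup j"
proof
  show "centralizer G (ax_subgroup j) \<subseteq> ax_subgroup j"
    by (rule centralizer_subset_ax_subgroup) (simp add: a_pow_x_in_ax_subgroup_iff)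
  show "ax_subgroup j \<subseteq> centralizer G (ax_subgroup j)"
    unfolding centralizer_def ax_subgroup_eq
    by (auto simp: a_pow_commute a_pow_commute_a_pow_x_iff a_pow_x_commute_a_pow_iff a_pow_x_commute_iff)
qed

lemma center_eq_Z:
  assumes "n \<ge> 2"
  shows "group_center G = Z"
proof
  show "group_center G \<subseteq> Z"
    unfolding group_center_def using assms
    by (intro centralizer_subset_Z[of 1 _ 0]) simp_all
  show "Z \<subseteq> group_center G"
  proof
    fix z assume z: "z \<in> Z"
    have "g \<otimes> z = z \<otimes> g" if "g \<in> carrier G" for g
      using that z centralizer_Z unfolding centralizer_def by blast
    then show "z \<in> group_center G"
      using z subgroup.subset[OF subgroup_Z] unfolding group_center_def centralizer_def by auto
  qed
qed

lemma subgroup_cases: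
  assumes "subgroup H G"
  obtains "H \<subseteq> Z"
    | i where "a_pow i \<in> H" "\<not> int n dvd i" "H \<subseteq> range a_pow"
    | i j where "a_pow i \<in> H" "\<not> int n dvd i" "a_pow_x j \<in> H"
    | j where "a_pow_x j \<in> H" "H \<subseteq> ax_subgroup j"
proof -
  have carrier_H: "h \<in> carrier G" if "h \<in> H" for h
    using that subgroup.subset[OF assms] by blast
  consider (noncentral) i where "a_pow i \<in> H" "\<not> int n dvd i"
    | (central) "\<And>i. a_pow i \<in> H \<Longrightarrow> int n dvd i"
    by auto
  then show thesis
  proof cases
    case noncentral
    show thesis
    proof (cases "\<exists>j. a_pow_x j \<in> H")
      case False
      have "h \<in> range a_pow" if "h \<in> H" for h
        using carrier_H[OF that] by (cases rule: carrier_cases) (use that False in auto)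
      with noncentral that(2) show thesis by blast
    qed (use noncentral that(3) in blast)
  next
    case central
    show thesis
    proof (cases "\<exists>j. a_pow_x j \<in> H")
      case False
      have "h \<in> Z" if "h \<in> H" for h
        using carrier_H[OF that] by (cases rule: carrier_cases)
          (use that False central in \<open>auto simp: a_pow_in_Z_iff\<close>)
      with that(1) show thesis by blast
    next
      case True
      then obtain j where j: "a_pow_x j \<in> H" by blast
      have a_pow_x_dvd: "int n dvd k - j" if "a_pow_x k \<in> H" for k
      proof -
        have "a_pow_x k \<otimes> inv (a_pow_x j) \<in> H"
          using that j assms by (simp add: subgroup.m_closed subgroup.m_inv_closed)
        then show ?thesis
          using central by (simp add: inv_a_pow_x a_pow_x_mult_a_pow_x)
      qed
      have "h \<in> ax_subgroup j" if "h \<in> H" for h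
        using carrier_H[OF that] by (cases rule: carrier_cases)
          (use that central a_pow_x_dvd in \<open>auto simp: a_pow_in_ax_subgroup_iff a_pow_x_in_ax_subgroup_iff\<close>)
      with j that(4) show thesis by blast
    qed
  qed
qed

lemma finite_Z: "finite Z"
  unfolding Z_eq by simp

lemma finite_ax_subgroup: "finite (ax_subgroup j)"
  unfolding ax_subgroup_eq by simp

lemma cd_measure_range_a_pow: "n \<ge> 2 \<Longrightarrow> cd_measure G (range a_pow) = 4 * n * n"
  unfolding cd_measure_def by (simp add: centralizer_range_a_pow card_range_a_pow)

lemma cd_measure_Z: "cd_measure G Z = 8 * n"
  unfolding cd_measure_def by (simp add: centralizer_Z card_Z card_carrier)

lemma cd_measure_carrier: "n \<ge> 2 \<Longrightarrow> cd_measure G (carrier G) = 8 * n"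
  unfolding cd_measure_def using center_eq_Z by (simp add: group_center_def card_Z card_carrier)

lemma cd_measure_ax_subgroup: "cd_measure G (ax_subgroup j) = 16"
  unfolding cd_measure_def by (simp add: centralizer_ax_subgroup card_ax_subgroup)

lemma subgroup_bounding_sets:
  assumes "subgroup H G"
  obtains S T where "H \<subseteq> S" "centralizer G H \<subseteq> T" "finite S" "finite T" "card T > 0"
    "S = range a_pow \<and> card S * card T = 4 * n * n
     \<or> (S = Z \<or> S = carrier G) \<and> card S * card T = 8 * n
     \<or> (\<exists>j. S = ax_subgroup j) \<and> card S * card T = 16"
  using assms
proof (cases rule: subgroup_cases)
  case 1
  with that[of Z "carrier G"] show thesis
    using finite_Z finite_carrier centralizer_subset_carrier[of G H] n_pos by (simp add: card_Z card_carrier)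
next
  case (2 i)
  with that[of "range a_pow" "range a_pow"] show thesis
    using finite_range_a_pow centralizer_subset_range_a_pow n_pos by (simp add: card_range_a_pow)
next
  case (3 i j)
  with that[of "carrier G" Z] show thesis
    using subgroup.subset[OF assms] finite_Z finite_carrier centralizer_subset_Z
    by (simp add: card_Z card_carrier)
next
  case (4 j)
  with that[of "ax_subgroup j" "ax_subgroup j"] show thesis
    using finite_ax_subgroup centralizer_subset_ax_subgroup by (auto simp: card_ax_subgroup)
qed

lemma cd_measure_le_max:
  assumes "n \<ge> 2" "subgroup H G"
  shows "cd_measure G H \<le> 4 * n * n"
proof -
  obtain S T where S: "H \<subseteq> S" "centralizer G H \<subseteq> T" "finite S" "finite T" "card T > 0"
    and "S = range a_pow \<and> card S * card T = 4 * n * n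
     \<or> (S = Z \<or> S = carrier G) \<and> card S * card T = 8 * n
     \<or> (\<exists>j. S = ax_subgroup j) \<and> card S * card T = 16"
    by (rule subgroup_bounding_sets[OF assms(2)])
  then have "card S * card T \<le> 4 * n * n"
    using four_n_sq_bounds(1,2)[OF assms(1)] by (elim disjE conjE) simp_all
  moreover have "cd_measure G H \<le> card S * card T"
    using S by (intro cd_measure_le)
  ultimately show ?thesis by (rule order.trans[rotated])
qed

lemma cd_measure_eq_max_cases:
  assumes "n \<ge> 2" "subgroup H G" "cd_measure G H = 4 * n * n"
  shows "H = range a_pow \<or> n = 2 \<and> (H = Z \<or> H = carrier G \<or> (\<exists>j. H = ax_subgroup j))"
proof -
  obtain S T where S: "H \<subseteq> S" "centralizer G H \<subseteq> T" "finite S" "finite T" "card T > 0"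
    and cases: "S = range a_pow \<and> card S * card T = 4 * n * n
     \<or> (S = Z \<or> S = carrier G) \<and> card S * card T = 8 * n
     \<or> (\<exists>j. S = ax_subgroup j) \<and> card S * card T = 16"
    by (rule subgroup_bounding_sets[OF assms(2)])
  have "cd_measure G H \<le> card S * card T"
    using S by (intro cd_measure_le)
  moreover have "card S * card T \<le> 4 * n * n"
    using cases four_n_sq_bounds(1,2)[OF assms(1)] by (elim disjE conjE) simp_all
  ultimately have tight: "card S * card T = 4 * n * n"
    using assms(3) by simp
  then have "H = S"
    using cd_measure_eq_imp_eq[OF S] assms(3) by simp
  with cases tight show ?thesis
    using four_n_sq_bounds(3,4)[OF assms(1)] by (elim disjE conjE) simp_all
qed

lemma comm_group_if_n_eq_1:
  assumes "n = 1"
  shows "comm_group G"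
proof (rule group_comm_groupI)
  fix g h assume "g \<in> carrier G" "h \<in> carrier G"
  then show "g \<otimes> h = h \<otimes> g"
    using assms by (elim carrier_cases)
      (simp_all add: a_pow_commute a_pow_commute_a_pow_x_iff a_pow_x_commute_a_pow_iff a_pow_x_commute_iff)
qed

lemma cd_max_eq: "n \<ge> 2 \<Longrightarrow> cd_max G = 4 * n * n"
  by (rule cd_max_eqI[OF finite_carrier cd_measure_le_max subgroup_range_a_pow cd_measure_range_a_pow])

lemma CD_lattice_eq: "n \<ge> 2 \<Longrightarrow> CD_lattice G = {H. subgroup H G \<and> cd_measure G H = 4 * n * n}"
  unfolding CD_lattice_def by (simp add: cd_max_eq)

lemma CD_lattice_if_n_ge_3:
  assumes "n \<ge> 3"
  shows "CD_lattice G = {range a_pow}"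
proof -
  have n_ge_2: "n \<ge> 2" using assms by simp
  have "H = range a_pow" if "subgroup H G" "cd_measure G H = 4 * n * n" for H
    using cd_measure_eq_max_cases[OF n_ge_2 that] assms by simp
  then show ?thesis
    unfolding CD_lattice_eq[OF n_ge_2]
    using cd_measure_range_a_pow[OF n_ge_2] subgroup_range_a_pow by blast
qed

lemma ax_subgroup_cong:
  assumes "int n dvd j - k"
  shows "ax_subgroup j = ax_subgroup k"
proof -
  have "int n dvd k - j"
    using assms by (simp add: dvd_diff_commute)
  then have "int n dvd l - j \<longleftrightarrow> int n dvd l - k" for l
    using int_dvd_diff_trans[of "int n" l j k] int_dvd_diff_trans[of "int n" l k j] assms by blast
  then show ?thesis
    unfolding ax_subgroup_def by simp
qed

lemma ax_subgroup_if_n_eq_2: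
  assumes "n = 2"
  shows "ax_subgroup j \<in> {ax_subgroup 0, ax_subgroup 1}"
proof -
  have "j - j mod 2 = 2 * (j div 2)"
    by (rule minus_mod_eq_mult_div)
  then have "ax_subgroup j = ax_subgroup (j mod 2)"
    using assms by (intro ax_subgroup_cong) simp
  moreover have "j mod 2 = 0 \<or> j mod 2 = 1"
    by presburger
  ultimately show ?thesis
    by (metis insertCI)
qed

lemma CD_lattice_if_n_eq_2:
  assumes "n = 2"
  shows "CD_lattice G = {Z, range a_pow, carrier G, ax_subgroup 0, ax_subgroup 1}"
    (is "_ = ?L")
proof -
  have n_ge_2: "n \<ge> 2" and "8 * n = 4 * n * n" "16 = 4 * n * n"
    using assms by simp_all
  show ?thesis
    unfolding CD_lattice_eq[OF n_ge_2]
  proof (rule Set.set_eqI, rule iffI)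
    fix H assume "H \<in> {H. subgroup H G \<and> cd_measure G H = 4 * n * n}"
    then show "H \<in> ?L"
      using cd_measure_eq_max_cases[OF n_ge_2] ax_subgroup_if_n_eq_2[OF assms] by blast
  next
    fix H assume "H \<in> ?L"
    then have "subgroup H G \<and> cd_measure G H = 4 * n * n"
      using subgroup_Z subgroup_range_a_pow subgroup_self subgroup_ax_subgroup
        cd_measure_Z cd_measure_range_a_pow[OF n_ge_2] cd_measure_carrier[OF n_ge_2]
        cd_measure_ax_subgroup \<open>8 * n = 4 * n * n\<close> \<open>16 = 4 * n * n\<close>
      by auto
    then show "H \<in> {H. subgroup H G \<and> cd_measure G H = 4 * n * n}"
      by simp
  qed
qed

lemma a_pow_mem_if_Z_subset:
  assumes "subgroup H G" "Z \<subseteq> H" "a_pow i \<in> H" "int n dvd k - i"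
  shows "a_pow k \<in> H"
proof -
  have "a_pow (k - i) \<in> H"
    using assms(2,4) by (auto simp: a_pow_in_Z_iff[symmetric])
  then have "a_pow (k - i) \<otimes> a_pow i \<in> H"
    using assms(3) by (rule subgroup.m_closed[OF assms(1)])
  then show ?thesis
    by (simp add: a_pow_mult_a_pow)
qed

lemma subgroup_containing_Z_if_n_eq_2:
  assumes "n = 2" "subgroup H G" "Z \<subseteq> H"
  shows "H \<in> {Z, range a_pow, carrier G, ax_subgroup 0, ax_subgroup 1}"
proof -
  have range_a_pow_subset: "range a_pow \<subseteq> H" if "a_pow i \<in> H" "\<not> int n dvd i" for i
  proof
    fix g assume "g \<in> range a_pow"
    then obtain k where k: "g = a_pow k" by blast
    have "int n dvd k - 0 \<or> int n dvd k - i"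
      using that(2) assms(1) by presburger
    then show "g \<in> H"
      using a_pow_mem_if_Z_subset[OF assms(2,3)] that(1) a_pow_zero subgroup.one_closed[OF assms(2)] k
      by metis
  qed
  from assms(2) show ?thesis
  proof (cases rule: subgroup_cases)
    case 1
    with assms(3) show ?thesis by simp
  next
    case (2 i)
    with range_a_pow_subset show ?thesis by blast
  next
    case (3 i j)
    have "a_pow_x k \<in> H" for k
      using subgroup.m_closed[OF assms(2) range_a_pow_subset[OF 3(1,2), THEN subsetD] 3(3)]
      by (metis a_pow_mult_a_pow_x diff_add_cancel rangeI)
    then have "carrier G \<subseteq> H"
      using range_a_pow_subset[OF 3(1,2)] unfolding carrier_eq by blast
    with subgroup.subset[OF assms(2)] show ?thesis by blast
  next
    case (4 j)
    have "a_pow n \<in> H" "a_pow 0 \<in> H"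
      using assms(3) unfolding Z_eq by simp_all
    then have "a_pow_x (j + n) \<in> H"
      using subgroup.m_closed[OF assms(2) _ 4(1)] by (metis a_pow_mult_a_pow_x add.commute)
    then have "H = ax_subgroup j"
      using 4 \<open>a_pow n \<in> H\<close> \<open>a_pow 0 \<in> H\<close> unfolding ax_subgroup_eq by blast
    then show ?thesis
      using ax_subgroup_if_n_eq_2[OF assms(1)] by simp
  qed
qed

lemma Z_subset_range_a_pow: "Z \<subseteq> range a_pow"
  unfolding Z_def by blast

lemma Z_subset_ax_subgroup: "Z \<subseteq> ax_subgroup j"
  unfolding ax_subgroup_def by blast

lemma CD_lattice_eq_center_supersets:
  assumes "n = 2"
  shows "CD_lattice G = {H. subgroup H G \<and> group_center G \<subseteq> H}"
  unfolding CD_lattice_if_n_eq_2[OF assms] center_eq_Z[OF eq_imp_le[OF assms[symmetric]]]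
proof (rule Set.set_eqI, rule iffI)
  fix H assume "H \<in> {Z, range a_pow, carrier G, ax_subgroup 0, ax_subgroup 1}"
  then show "H \<in> {H. subgroup H G \<and> Z \<subseteq> H}"
    using subgroup_Z subgroup_range_a_pow subgroup_self subgroup_ax_subgroup
      Z_subset_range_a_pow subgroup.subset[OF subgroup_Z] Z_subset_ax_subgroup
    by (elim insertE) auto
next
  fix H assume "H \<in> {H. subgroup H G \<and> Z \<subseteq> H}"
  then show "H \<in> {Z, range a_pow, carrier G, ax_subgroup 0, ax_subgroup 1}"
    using subgroup_containing_Z_if_n_eq_2[OF assms] by blast
qed

lemma quasi_antichain_if_n_eq_2:
  assumes "n = 2"
  shows "quasi_antichain (CD_lattice G) 3"
proof -
  let ?mids = "{range a_pow, ax_subgroup 0, ax_subgroup 1}"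
  have "a_pow 1 \<notin> ax_subgroup j" "a_pow_x 0 \<notin> ax_subgroup 1" for j
    unfolding a_pow_in_ax_subgroup_iff a_pow_x_in_ax_subgroup_iff using assms by simp_all
  then have "range a_pow \<noteq> ax_subgroup j" "ax_subgroup 0 \<noteq> ax_subgroup 1" for j
    using a_pow_x_in_ax_subgroup_iff[of 0 0] by auto
  then have "card ?mids = 3"
    by simp
  have card_mid: "finite S \<and> card S = 4" if "S \<in> ?mids" for S
    using that assms finite_range_a_pow card_range_a_pow finite_ax_subgroup card_ax_subgroup by auto
  then have outside: "Z \<noteq> carrier G" "Z \<notin> ?mids" "carrier G \<notin> ?mids"
    using card_Z card_carrier assms by force+
  have lattice: "CD_lattice G = {Z, carrier G} \<union> ?mids"
    unfolding CD_lattice_if_n_eq_2[OF assms] by blast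
  have bounds: "Z \<subseteq> S \<and> S \<subseteq> carrier G" if "S \<in> {Z, carrier G} \<union> ?mids" for S
    using that subgroup.subset[OF subgroup_Z] subgroup.subset[OF subgroup_ax_subgroup]
      Z_subset_range_a_pow Z_subset_ax_subgroup[of 0] Z_subset_ax_subgroup[of 1] by auto
  have incomparable: "S = T" if "S \<in> ?mids" "T \<in> ?mids" "S \<subseteq> T" for S T
    using card_mid[OF that(1)] card_mid[OF that(2)] that(3) by (metis card_subset_eq)
  show ?thesis
    unfolding quasi_antichain_def lattice
    by (intro exI[of _ Z] exI[of _ "carrier G"] exI[of _ ?mids] conjI ballI impI refl finite.intros
        outside \<open>card ?mids = 3\<close> bounds incomparable)
qed

end

theorem corollary3p2:
  fixes G (structure) and a x :: 'a and n :: nat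
  assumes "group G" and "n \<ge> 1"
    and "a \<in> carrier G" and "x \<in> carrier G"
    and "generate G {a, x} = carrier G"
    and "a [^] (2 * n) = \<one>"
    and "x [^] (2::nat) = a [^] n"
    and "inv x \<otimes> a \<otimes> x = inv a"
    and "finite (carrier G)" and "card (carrier G) = 4 * n"
  shows "(n \<noteq> 2 \<longrightarrow> chain_length_zero (CD_lattice G)
            \<and> (n = 1 \<longrightarrow> CD_lattice G = {carrier G})
            \<and> (n \<ge> 3 \<longrightarrow> CD_lattice G = {generate G {a}}))
       \<and> (n = 2 \<longrightarrow> quasi_antichain (CD_lattice G) 3
            \<and> CD_lattice G = {H. subgroup H G \<and> group_center G \<subseteq> H})"
proof -
  interpret dicyclic G a x n
    by (intro dicyclic.intro dicyclic_axioms.intro) (use assms in auto)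
  have "CD_lattice G = {carrier G}" if "n = 1"
    using CD_lattice_comm_group[OF comm_group_if_n_eq_1[OF that] finite_carrier] .
  moreover have "CD_lattice G = {generate G {a}}" if "n \<ge> 3"
    using CD_lattice_if_n_ge_3[OF that] by (simp add: generate_a)
  moreover have "n = 1 \<or> n = 2 \<or> n \<ge> 3"
    using assms(2) by auto
  ultimately show ?thesis
    using quasi_antichain_if_n_eq_2 CD_lattice_eq_center_supersets
    unfolding chain_length_zero_def by auto
qed

end
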